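(* Let $k\ge1$ be an integer and $\rho\in(0,1)$. Let $\beta=\frac{1-\sqrt{1-\rho}}{1+\sqrt{1-\rho}}$, $\rho_*=\frac{2\beta^k}{1+\beta^{2k}}$, $\beta_\rho=\frac{\sqrt{1+\rho}-\sqrt{1-\rho}}{\sqrt{1+\rho}+\sqrt{1-\rho}}$, $\rho_1=\frac{2\beta_\rho^k}{1+\beta_\rho^{2k}}$, $$C_*=\frac{\rho_*}{2\rho^k}\Big(\big(2+\rho-2\sqrt{1+\rho}\big)^k+\big(2+\rho+2\sqrt{1+\rho}\big)^k\Big),\qquad C_1=\frac{\rho_1}{2\rho^k}\Big(\big(1-\sqrt{1+\rho^2}\big)^k+\big(1+\sqrt{1+\rho^2}\big)^k\Big).$$ Then $\frac{2+\rho^k}{2-\rho^k}\le C_1$ whenever $k>1$, and $C_1\le C_*$ for all $k\ge1$. *)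

theory Defs
  imports Complex_Main
begin

definition beta_L7 :: "real \<Rightarrow> real" where
  "beta_L7 \<rho> = (1 - sqrt (1 - \<rho>)) / (1 + sqrt (1 - \<rho>))"

definition rho_star :: "nat \<Rightarrow> real \<Rightarrow> real" where
  "rho_star k \<rho> = 2 * beta_L7 \<rho> ^ k / (1 + beta_L7 \<rho> ^ (2 * k))"

definition beta_rho :: "real \<Rightarrow> real" where
  "beta_rho \<rho> = (sqrt (1 + \<rho>) - sqrt (1 - \<rho>)) / (sqrt (1 + \<rho>) + sqrt (1 - \<rho>))"

definition rho_one :: "nat \<Rightarrow> real \<Rightarrow> real" where
  "rho_one k \<rho> = 2 * beta_rho \<rho> ^ k / (1 + beta_rho \<rho> ^ (2 * k))"

definition C_star :: "nat \<Rightarrow> real \<Rightarrow> real" where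
  "C_star k \<rho> = rho_star k \<rho> / (2 * \<rho> ^ k) *
     ((2 + \<rho> - 2 * sqrt (1 + \<rho>)) ^ k + (2 + \<rho> + 2 * sqrt (1 + \<rho>)) ^ k)"

definition C_one :: "nat \<Rightarrow> real \<Rightarrow> real" where
  "C_one k \<rho> = rho_one k \<rho> / (2 * \<rho> ^ k) *
     ((1 - sqrt (1 + \<rho>^2)) ^ k + (1 + sqrt (1 + \<rho>^2)) ^ k)"

end

theory Submission
  imports Defs
begin

text \<open>
  Write \<open>t = \<surd>(1 + \<rho>)\<close>, \<open>s = \<surd>(1 - \<rho>)\<close>, \<open>u = \<surd>(1 + \<rho>\<^sup>2)\<close>, \<open>w = \<surd>(1 - \<rho>\<^sup>2)\<close> and
  \<open>\<Sigma>\<^sub>n(x) = (1 + x)\<^sup>n + (1 - x)\<^sup>n\<close>. Since \<open>\<beta> = (1 - s)/(1 + s)\<close>, \<open>\<beta>\<^sub>\<rho> = (t - s)/(t + s)\<close> and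
  \<open>2q\<^sup>k/(1 + q\<^sup>2\<^sup>k) = 2(pr)\<^sup>k/(p\<^sup>2\<^sup>k + r\<^sup>2\<^sup>k)\<close> for \<open>q = r/p\<close>, the constants collapse to
  \<open>C\<^sub>1 = \<Sigma>\<^sub>k(u)/\<Sigma>\<^sub>k(w)\<close> and \<open>C\<^sub>* = \<Sigma>\<^sub>2\<^sub>k(t)/\<Sigma>\<^sub>2\<^sub>k(s)\<close>.

  The first inequality says \<open>\<rho>\<^sup>k(\<Sigma>\<^sub>k(u) + \<Sigma>\<^sub>k(w)) \<le> 2(\<Sigma>\<^sub>k(u) - \<Sigma>\<^sub>k(w))\<close>. Both sums satisfy
  \<open>\<Sigma>\<^sub>n\<^sub>+\<^sub>2 = 2\<Sigma>\<^sub>n\<^sub>+\<^sub>1 \<plusminus> \<rho>\<^sup>2\<Sigma>\<^sub>n\<close>, so their sum and difference satisfy coupled recurrences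
  with nonnegative coefficients, which propagate the inequality from its equality case \<open>k = 2\<close>.

  For the second, bound \<open>\<Sigma>\<^sub>k(u) \<le> (u + 1)\<^sup>k + (u - 1)\<^sup>k\<close>, multiply out against
  \<open>\<Sigma>\<^sub>2\<^sub>k(s) = (1 + s)\<^sup>2\<^sup>k + (1 - s)\<^sup>2\<^sup>k\<close>, merge the four terms pairwise by superadditivity of
  \<open>x \<mapsto> x\<^sup>k\<close> and compare factor by factor: \<open>2u(1 \<plusminus> s)\<^sup>2 \<le> (1 + t)\<^sup>2(1 \<plusminus> w)\<close>.
\<close>

lemma power_add_le_add_power:
  fixes x y :: real
  assumes "0 \<le> x" "0 \<le> y" "1 \<le> n"
  shows "x ^ n + y ^ n \<le> (x + y) ^ n"
  using assms(3)
proof (induction n rule: dec_induct)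
  case base
  show ?case by simp
next
  case (step n)
  have "x ^ Suc n + y ^ Suc n = x * x ^ n + y * y ^ n" by simp
  also have "\<dots> \<le> (x + y) * x ^ n + (x + y) * y ^ n"
    using assms by (intro add_mono mult_right_mono) auto
  also have "\<dots> \<le> (x + y) * (x + y) ^ n"
    using step assms by (simp add: distrib_left[symmetric] mult_left_mono)
  finally show ?case by simp
qed

lemma power_sum_mult_le:
  fixes x y a b :: real
  assumes "0 \<le> x" "0 \<le> y" "0 \<le> a" "0 \<le> b" "1 \<le> n"
  shows "(x ^ n + y ^ n) * (a ^ n + b ^ n) \<le> ((x + y) * a) ^ n + ((x + y) * b) ^ n"
proof -
  have "(x ^ n + y ^ n) * (a ^ n + b ^ n) = ((x * a) ^ n + (y * a) ^ n) + ((x * b) ^ n + (y * b) ^ n)"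
    by (simp add: algebra_simps)
  also have "\<dots> \<le> (x * a + y * a) ^ n + (x * b + y * b) ^ n"
    using assms by (intro add_mono power_add_le_add_power) auto
  finally show ?thesis by (simp add: distrib_right)
qed

lemma two_ratio_power_div:
  fixes p q :: real
  assumes "p \<noteq> 0"
  shows "2 * (q / p) ^ k / (1 + (q / p) ^ (2 * k)) = 2 * (p * q) ^ k / (p ^ (2 * k) + q ^ (2 * k))"
proof -
  have "0 < p ^ (2 * k)" "0 \<le> q ^ (2 * k)"
    using assms by (simp_all add: power_mult zero_less_power2)
  then show ?thesis
    using assms by (simp add: power_divide field_simps power_mult_distrib power_mult power2_eq_square)
qed

definition conj_power_sum :: "real \<Rightarrow> nat \<Rightarrow> real" where
  "conj_power_sum x n = (1 + x) ^ n + (1 - x) ^ n"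

lemma conj_power_sum_Suc_Suc:
  "conj_power_sum x (Suc (Suc n)) = 2 * conj_power_sum x (Suc n) + (x\<^sup>2 - 1) * conj_power_sum x n"
  unfolding conj_power_sum_def by (simp add: power2_eq_square algebra_simps)

lemma conj_power_sum_pos:
  assumes "0 \<le> x"
  shows "0 < conj_power_sum x n"
proof (cases "x \<le> 1 \<or> n = 0")
  case True
  then show ?thesis
    using assms by (auto simp: conj_power_sum_def add_pos_nonneg)
next
  case False
  then have "\<bar>1 - x\<bar> ^ n < (1 + x) ^ n"
    using assms by (intro power_strict_mono) auto
  then show ?thesis
    unfolding conj_power_sum_def power_abs[symmetric] by linarith
qed

lemma rho_star_eq:
  assumes "0 < \<rho>" "\<rho> \<le> 1"
  shows "rho_star k \<rho> = 2 * \<rho> ^ k / conj_power_sum (sqrt (1 - \<rho>)) (2 * k)"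
proof -
  define s where "s = sqrt (1 - \<rho>)"
  have "0 \<le> s" "(1 + s) * (1 - s) = \<rho>"
    using assms by (auto simp: s_def algebra_simps)
  then show ?thesis
    using two_ratio_power_div[of "1 + s" "1 - s" k]
    by (simp add: rho_star_def beta_L7_def conj_power_sum_def s_def[symmetric])
qed

lemma rho_one_eq:
  assumes "0 < \<rho>" "\<rho> \<le> 1"
  shows "rho_one k \<rho> = 2 * \<rho> ^ k / conj_power_sum (sqrt (1 - \<rho>\<^sup>2)) k"
proof -
  define a b w where "a = sqrt (1 + \<rho>)" and "b = sqrt (1 - \<rho>)" and "w = sqrt (1 - \<rho>\<^sup>2)"
  have a: "a\<^sup>2 = 1 + \<rho>" "1 \<le> a" and b: "b\<^sup>2 = 1 - \<rho>" "0 \<le> b"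
    using assms by (auto simp: a_def b_def)
  have "a * b = w"
    by (simp add: a_def b_def w_def real_sqrt_mult[symmetric] power2_eq_square algebra_simps)
  then have prod: "(a + b) * (a - b) = 2 * \<rho>"
    and sq: "(a + b)\<^sup>2 = 2 * (1 + w)" "(a - b)\<^sup>2 = 2 * (1 - w)"
    using a b by (simp_all add: power2_eq_square algebra_simps)
  have "a + b \<noteq> 0"
    using a b by linarith
  then have "rho_one k \<rho> = 2 * ((a + b) * (a - b)) ^ k / (((a + b)\<^sup>2) ^ k + ((a - b)\<^sup>2) ^ k)"
    using two_ratio_power_div[of "a + b" "a - b" k]
    by (simp add: rho_one_def beta_rho_def a_def b_def power_mult)
  also have "\<dots> = 2 * (2 ^ k * \<rho> ^ k) / (2 ^ k * ((1 + w) ^ k + (1 - w) ^ k))"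
    by (simp only: prod sq power_mult_distrib distrib_left[symmetric])
  finally show ?thesis
    by (simp add: conj_power_sum_def w_def)
qed

lemma C_star_eq:
  assumes "0 < \<rho>" "\<rho> \<le> 1"
  shows "C_star k \<rho> = conj_power_sum (sqrt (1 + \<rho>)) (2 * k) / conj_power_sum (sqrt (1 - \<rho>)) (2 * k)"
proof -
  define t where "t = sqrt (1 + \<rho>)"
  have "t\<^sup>2 = 1 + \<rho>"
    using assms by (simp add: t_def)
  then have "2 + \<rho> - 2 * t = (1 - t)\<^sup>2" "2 + \<rho> + 2 * t = (1 + t)\<^sup>2"
    by (simp_all add: power2_eq_square algebra_simps)
  then have "C_star k \<rho> = 2 * \<rho> ^ k / conj_power_sum (sqrt (1 - \<rho>)) (2 * k) / (2 * \<rho> ^ k)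
      * conj_power_sum t (2 * k)"
    using assms by (simp add: C_star_def rho_star_eq t_def[symmetric] conj_power_sum_def power_mult add.commute)
  then show ?thesis
    using assms by (simp add: t_def)
qed

lemma C_one_eq:
  assumes "0 < \<rho>" "\<rho> \<le> 1"
  shows "C_one k \<rho> = conj_power_sum (sqrt (1 + \<rho>\<^sup>2)) k / conj_power_sum (sqrt (1 - \<rho>\<^sup>2)) k"
proof -
  have "C_one k \<rho> = 2 * \<rho> ^ k / conj_power_sum (sqrt (1 - \<rho>\<^sup>2)) k / (2 * \<rho> ^ k)
      * conj_power_sum (sqrt (1 + \<rho>\<^sup>2)) k"
    using assms by (simp add: C_one_def rho_one_eq conj_power_sum_def add.commute)
  then show ?thesis
    using assms by simp
qed

lemma conj_power_sum_gap:
  fixes \<rho> :: real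
  assumes "0 \<le> \<rho>" "\<rho> \<le> 1" "2 \<le> n"
  defines "P \<equiv> conj_power_sum (sqrt (1 + \<rho>\<^sup>2))" and "Q \<equiv> conj_power_sum (sqrt (1 - \<rho>\<^sup>2))"
  shows "\<rho> ^ n * (P n + Q n) \<le> 2 * (P n - Q n)"
proof -
  have "\<rho>\<^sup>2 \<le> 1"
    using assms(1,2) by (simp add: power_le_one)
  then have P_pos: "0 < P m" and Q_pos: "0 < Q m"
    and P_rec: "P (Suc (Suc m)) = 2 * P (Suc m) + \<rho>\<^sup>2 * P m"
    and Q_rec: "Q (Suc (Suc m)) = 2 * Q (Suc m) - \<rho>\<^sup>2 * Q m" for m
    by (simp_all add: P_def Q_def conj_power_sum_pos conj_power_sum_Suc_Suc)
  have P_2: "P 2 = 4 + 2 * \<rho>\<^sup>2" and Q_2: "Q 2 = 4 - 2 * \<rho>\<^sup>2"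
    using P_rec[of 0] Q_rec[of 0] by (simp_all add: P_def Q_def conj_power_sum_def power2_eq_square)
  define S D where "S m = P m + Q m" and "D m = P m - Q m" for m
  have S_rec: "S (Suc (Suc m)) = 2 * S (Suc m) + \<rho>\<^sup>2 * D m"
    and D_rec: "D (Suc (Suc m)) = 2 * D (Suc m) + \<rho>\<^sup>2 * S m"
    and S_nonneg: "0 \<le> S m" and D_le_S: "D m \<le> S m" for m
    using P_rec[of m] Q_rec[of m] P_pos[of m] Q_pos[of m] by (simp_all add: S_def D_def algebra_simps)
  have "\<rho> ^ n * S n \<le> 2 * D n"
    using assms(3)
  proof (induction n rule: dec_induct)
    case base
    then show ?case
      by (simp add: S_def D_def P_2 Q_2 power2_eq_square)
  next
    case (step n)
    then obtain m where n: "n = Suc m"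
      by (cases n) auto
    have "\<rho> ^ Suc n * S (Suc n) = 2 * (\<rho> ^ Suc n * S n) + \<rho>\<^sup>2 * (\<rho> ^ Suc n * D m)"
      by (simp add: n S_rec algebra_simps)
    also have "\<dots> \<le> 2 * (\<rho> ^ n * S n) + \<rho>\<^sup>2 * S m"
    proof (intro add_mono mult_left_mono)
      show "\<rho> ^ Suc n * S n \<le> \<rho> ^ n * S n"
        using assms(1,2) S_nonneg by (intro mult_right_mono power_decreasing) auto
      have "\<rho> ^ Suc n * D m \<le> \<rho> ^ Suc n * S m"
        using assms(1) D_le_S by (intro mult_left_mono) auto
      also have "\<dots> \<le> S m"
        using assms(1,2) S_nonneg by (intro mult_left_le_one_le power_le_one) auto
      finally show "\<rho> ^ Suc n * D m \<le> S m" .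
    qed auto
    also have "\<dots> \<le> 2 * D (Suc n)"
      using step.IH mult_nonneg_nonneg[OF zero_le_power2 S_nonneg, of \<rho> m]
      unfolding n D_rec by (simp add: algebra_simps)
    finally show ?case .
  qed
  then show ?thesis
    by (simp add: S_def D_def)
qed

lemma sqrt_one_plus_square_le:
  fixes \<rho> :: real
  assumes "0 \<le> \<rho>" "\<rho> \<le> 1"
  shows "sqrt (1 + \<rho>\<^sup>2) \<le> 1 + \<rho> / 2"
proof (rule real_le_lsqrt)
  have "\<rho>\<^sup>2 \<le> \<rho>"
    using assms by (simp add: power2_eq_square mult_left_le_one_le)
  then show "1 + \<rho>\<^sup>2 \<le> (1 + \<rho> / 2)\<^sup>2"
    using assms(1) by (simp add: power2_eq_square algebra_simps)
qed (use assms in auto)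

lemma sqrt_one_minus_le:
  fixes \<rho> :: real
  assumes "0 \<le> \<rho>" "\<rho> \<le> 1"
  shows "sqrt (1 - \<rho>) \<le> 1 - \<rho> / 2"
  by (rule real_le_lsqrt) (use assms in \<open>auto simp: power2_eq_square algebra_simps\<close>)

lemma conj_factor_bound_plus:
  fixes \<rho> :: real
  assumes "0 \<le> \<rho>" "\<rho> \<le> 1"
  defines "t \<equiv> sqrt (1 + \<rho>)" and "s \<equiv> sqrt (1 - \<rho>)"
    and "u \<equiv> sqrt (1 + \<rho>\<^sup>2)" and "w \<equiv> sqrt (1 - \<rho>\<^sup>2)"
  shows "2 * u * (1 + s)\<^sup>2 \<le> (1 + t)\<^sup>2 * (1 + w)"
proof -
  have t: "t\<^sup>2 = 1 + \<rho>" "1 \<le> t" and s: "0 \<le> s"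
    using assms(1,2) by (auto simp: t_def s_def)
  have w: "w = t * s"
    by (simp add: w_def t_def s_def real_sqrt_mult[symmetric] power2_eq_square algebra_simps)
  have "2 * u * (1 + s) \<le> (2 + \<rho>) * (2 - \<rho> / 2)"
    using sqrt_one_plus_square_le[OF assms(1,2)] sqrt_one_minus_le[OF assms(1,2)] s assms(1)
    by (intro mult_mono) (auto simp: u_def s_def)
  also have "\<dots> \<le> 4 + \<rho>"
    using assms(1) by (simp add: algebra_simps)
  also have "\<dots> \<le> (1 + t)\<^sup>2"
    using t by (simp add: power2_eq_square algebra_simps)
  finally have "2 * u * (1 + s) \<le> (1 + t)\<^sup>2" .
  moreover have "1 + s \<le> 1 + w"
    using mult_right_mono[OF t(2) s] by (simp add: w)
  ultimately have "2 * u * (1 + s) * (1 + s) \<le> (1 + t)\<^sup>2 * (1 + w)"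
    using s by (intro mult_mono) auto
  then show ?thesis
    by (simp add: power2_eq_square mult.assoc)
qed

lemma conj_factor_bound_minus:
  fixes \<rho> :: real
  assumes "0 \<le> \<rho>" "\<rho> \<le> 1"
  defines "t \<equiv> sqrt (1 + \<rho>)" and "s \<equiv> sqrt (1 - \<rho>)"
    and "u \<equiv> sqrt (1 + \<rho>\<^sup>2)" and "w \<equiv> sqrt (1 - \<rho>\<^sup>2)"
  shows "2 * u * (1 - s)\<^sup>2 \<le> (1 + t)\<^sup>2 * (1 - w)"
proof -
  have t: "t\<^sup>2 = 1 + \<rho>" "1 \<le> t" and s: "s\<^sup>2 = 1 - \<rho>" "0 \<le> s"
    using assms(1,2) by (auto simp: t_def s_def)
  have w: "w = t * s"
    by (simp add: w_def t_def s_def real_sqrt_mult[symmetric] power2_eq_square algebra_simps)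
  have "2 * u * (1 + w) \<le> 3 * (1 + w)"
    using sqrt_one_plus_square_le[OF assms(1,2)] assms(2) s(2) t(2)
    by (intro mult_right_mono) (auto simp: u_def w)
  also have "\<dots> \<le> (2 + w)\<^sup>2"
    using s(2) t(2) by (simp add: power2_eq_square algebra_simps w)
  also have "\<dots> \<le> ((1 + t) * (1 + s))\<^sup>2"
    using s(2) t(2) by (intro power_mono) (auto simp: w algebra_simps)
  finally have plus_bound: "2 * u * (1 + w) \<le> (1 + t)\<^sup>2 * (1 + s)\<^sup>2"
    by (simp add: power_mult_distrib)
  have "(1 - s) * (1 + s) = \<rho>"
    using s(1) by (simp add: power2_eq_square algebra_simps)
  then have conj_s: "(1 - s)\<^sup>2 * (1 + s)\<^sup>2 = \<rho>\<^sup>2"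
    by (simp add: power_mult_distrib[symmetric])
  have conj_w: "(1 - w) * (1 + w) = \<rho>\<^sup>2"
    using t(1) s(1) unfolding w by algebra
  have "2 * u * (1 - s)\<^sup>2 * ((1 + w) * (1 + s)\<^sup>2) = 2 * u * (1 + w) * \<rho>\<^sup>2"
    by (simp only: conj_s[symmetric] ac_simps)
  also have "\<dots> \<le> (1 + t)\<^sup>2 * (1 + s)\<^sup>2 * \<rho>\<^sup>2"
    using plus_bound by (intro mult_right_mono) auto
  also have "\<dots> = (1 + t)\<^sup>2 * (1 - w) * ((1 + w) * (1 + s)\<^sup>2)"
    by (simp only: conj_w[symmetric] ac_simps)
  finally have "2 * u * (1 - s)\<^sup>2 * ((1 + w) * (1 + s)\<^sup>2)
      \<le> (1 + t)\<^sup>2 * (1 - w) * ((1 + w) * (1 + s)\<^sup>2)" .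
  moreover have "0 < (1 + w) * (1 + s)\<^sup>2"
    using s(2) t(2) by (intro mult_pos_pos add_pos_nonneg) (auto simp: w)
  ultimately show ?thesis
    by (rule mult_right_le_imp_le)
qed

lemma conj_power_sum_cross_le:
  fixes \<rho> :: real
  assumes "0 \<le> \<rho>" "\<rho> \<le> 1" "1 \<le> k"
  shows "conj_power_sum (sqrt (1 + \<rho>\<^sup>2)) k * conj_power_sum (sqrt (1 - \<rho>)) (2 * k)
    \<le> conj_power_sum (sqrt (1 + \<rho>)) (2 * k) * conj_power_sum (sqrt (1 - \<rho>\<^sup>2)) k"
proof -
  define t s u w where "t = sqrt (1 + \<rho>)" and "s = sqrt (1 - \<rho>)"
    and "u = sqrt (1 + \<rho>\<^sup>2)" and "w = sqrt (1 - \<rho>\<^sup>2)"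
  have u: "1 \<le> u" and s: "0 \<le> s" and w: "0 \<le> w"
    using assms(1,2) by (simp_all add: u_def s_def w_def power_le_one)
  have bounds: "2 * u * (1 + s)\<^sup>2 \<le> (1 + t)\<^sup>2 * (1 + w)" "2 * u * (1 - s)\<^sup>2 \<le> (1 + t)\<^sup>2 * (1 - w)"
    using conj_factor_bound_plus[OF assms(1,2)] conj_factor_bound_minus[OF assms(1,2)]
    by (simp_all add: t_def s_def u_def w_def)
  have "conj_power_sum u k \<le> (1 + u) ^ k + (u - 1) ^ k"
    using u power_abs[of "1 - u" k] abs_ge_self[of "(1 - u) ^ k"]
    by (simp add: conj_power_sum_def)
  then have "conj_power_sum u k * conj_power_sum s (2 * k)
      \<le> ((1 + u) ^ k + (u - 1) ^ k) * (((1 + s)\<^sup>2) ^ k + ((1 - s)\<^sup>2) ^ k)"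
    using conj_power_sum_pos[OF s, of "2 * k"]
    by (simp add: conj_power_sum_def power_mult mult_right_mono)
  also have "\<dots> \<le> (2 * u * (1 + s)\<^sup>2) ^ k + (2 * u * (1 - s)\<^sup>2) ^ k"
    using power_sum_mult_le[of "1 + u" "u - 1" "(1 + s)\<^sup>2" "(1 - s)\<^sup>2" k] u assms(3)
    by simp
  also have "\<dots> \<le> ((1 + t)\<^sup>2 * (1 + w)) ^ k + ((1 + t)\<^sup>2 * (1 - w)) ^ k"
    using bounds u by (intro add_mono power_mono) auto
  also have "\<dots> = ((1 + t)\<^sup>2) ^ k * conj_power_sum w k"
    unfolding conj_power_sum_def power_mult_distrib by (rule distrib_left[symmetric])
  also have "\<dots> \<le> conj_power_sum t (2 * k) * conj_power_sum w k"
    using conj_power_sum_pos[OF w, of k]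
    by (intro mult_right_mono) (auto simp: conj_power_sum_def power_mult)
  finally show ?thesis
    by (simp add: t_def s_def u_def w_def)
qed

theorem lemma7:
  fixes k :: nat and \<rho> :: real
  assumes "k \<ge> 1" and "0 < \<rho>" and "\<rho> < 1"
  shows "(k > 1 \<longrightarrow> (2 + \<rho> ^ k) / (2 - \<rho> ^ k) \<le> C_one k \<rho>)
         \<and> C_one k \<rho> \<le> C_star k \<rho>"
proof -
  have \<rho>: "0 < \<rho>" "\<rho> \<le> 1"
    using assms(2,3) by auto
  define P Q where "P = conj_power_sum (sqrt (1 + \<rho>\<^sup>2)) k" and "Q = conj_power_sum (sqrt (1 - \<rho>\<^sup>2)) k"
  have "0 < Q"
    using \<rho> by (simp add: Q_def conj_power_sum_pos power_le_one)
  have C_one: "C_one k \<rho> = P / Q"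
    using C_one_eq[OF \<rho>] by (simp add: P_def Q_def)
  have "(2 + \<rho> ^ k) / (2 - \<rho> ^ k) \<le> C_one k \<rho>" if "k > 1"
  proof -
    have "\<rho> ^ k * (P + Q) \<le> 2 * (P - Q)"
      using conj_power_sum_gap[of \<rho> k] \<rho> that by (simp add: P_def Q_def)
    then have "(2 + \<rho> ^ k) * Q \<le> P * (2 - \<rho> ^ k)"
      by (simp add: algebra_simps)
    moreover have "\<rho> ^ k < 1"
      using assms by (simp add: power_less_one_iff)
    ultimately show ?thesis
      using \<open>0 < Q\<close> by (simp add: C_one divide_simps)
  qed
  moreover have "C_one k \<rho> \<le> C_star k \<rho>"
    using conj_power_sum_cross_le[of \<rho> k] conj_power_sum_pos[of "sqrt (1 - \<rho>)" "2 * k"] \<rho> assms(1) \<open>0 < Q\<close>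
    by (simp add: C_one C_star_eq P_def Q_def divide_simps)
  ultimately show ?thesis
    by blast
qed

end
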